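(* Let $f:\mathbb R\to\mathbb R$ be monotonically increasing with $f(0)=0$. Let $\vec X^m\in\underline V^h_{\partial_0}$ satisfy assumption $(\mathfrak A)$, let $\Delta t_m>0$, and let $(\delta\vec X^{m+1},\kappa^{m+1})\in\underline V^h_\partial\times W^h_{\partial_0}$ satisfy, with $\vec X^{m+1}=\vec X^m+\delta\vec X^{m+1}$, $$\Big(\vec X^m\cdot\vec e_1\,\tfrac{\vec X^{m+1}-\vec X^m}{\Delta t_m},\chi\,\vec\nu^m|\vec X^m_\rho|\Big)^h=\Big(\vec X^m\cdot\vec e_1\,\pi^h[f(\kappa^{m+1})],\chi|\vec X^m_\rho|\Big)^h\quad\forall\chi\in W^h_{\partial_0},$$ $$\Big(\vec X^m\cdot\vec e_1\,\kappa^{m+1}\vec\nu^m,\vec\eta\,|\vec X^m_\rho|\Big)^h+\big(\vec\eta\cdot\vec e_1,|\vec X^{m+1}_\rho|\big)+\Big((\vec X^m\cdot\vec e_1)\vec X^{m+1}_\rho,\vec\eta_\rho|\vec X^m_\rho|^{-1}\Big)=B^m(\vec\eta)\quad\forall\vec\eta\in\underline V^h_\partial.$$ Then $E(\vec X^{m+1})+2\pi\Delta t_m\big(\vec X^m\cdot\vec e_1\,f(\kappa^{m+1}),\kappa^{m+1}|\vec X^m_\rho|\big)^h\le E(\vec X^m)$, and in particular $E(\vec X^{m+1})\le E(\vec X^m)$.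
   Context: Setup. $\vec e_1=(1,0)^T$, $\vec e_2=(0,1)^T$; "$\cdot$" is the Euclidean inner product; $[r]_+=\max\{r,0\}$, $[r]_-=-\max\{-r,0\}$. $I$ is either the periodic interval $\mathbb R/\mathbb Z$ (with $\partial I=\emptyset$) or $I=(0,1)$ (with $\partial I=\{0,1\}$). $\partial I=\partial_DI\cup\partial_0I\cup\partial_1I\cup\partial_2I$ is a given disjoint partition, and $\widehat\varrho^{(p)}\in\mathbb R$, $p\in\{0,1\}$, are given constants with $|\widehat\varrho^{(p)}|\le1$. Let $J\ge3$, $h=1/J$, $q_j=jh$ ($j=0,\dots,J$; $q_0=q_J$ identified in the periodic case). $V^h$ is the space of continuous functions on $\overline I$ (periodic if $I=\mathbb R/\mathbb Z$) that are affine on each $[q_{j-1},q_j]$, and $\pi^h$ is the nodal interpolation onto $V^h$; $\underline V^h=[V^h]^2$; $\underline V^h_{\partial_0}=\{\vec\eta\in\underline V^h:\vec\eta(\rho)\cdot\vec e_1=0\ \forall\rho\in\partial_0I\}$; $\underline V^h_\partial=\{\vec\eta\in\underline V^h_{\partial_0}:\vec\eta(\rho)\cdot\vec e_i=0\ \forall\rho\in\partial_iI,\ i=1,2;\ \vec\eta(\rho)=\vec0\ \forall\rho\in\partial_DI\}$; $W^h_{\partial_0}=\{\chi\in V^h:\chi(\rho)=0\ \forall\rho\in\partial_0I\}$. $(\cdot,\cdot)$ is the $L^2(I)$ inner product, and for piecewise continuous $f,g$ the mass-lumped product is $(f,g)^h=\tfrac h2\sum_{j=1}^J[(fg)(q_j^-)+(fg)(q_{j-1}^+)]$.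 $\vec\nu^m=-[\vec X^m_\rho]^\perp/|\vec X^m_\rho|$ with $(a,b)^\perp=(b,-a)$. Assumption $(\mathfrak A)$: $|\vec X^m_\rho|>0$ a.e. on $I$ and $\vec X^m(\rho)\cdot\vec e_1>0$ for all $\rho\in\overline I\setminus\partial_0I$. $B^m(\vec\eta)=-\sum_{p\in\partial_1I}\widehat\varrho^{(p)}(\vec X^m(p)\cdot\vec e_1)\vec\eta(p)\cdot\vec e_2-\sum_{p\in\partial_2I}\big(([\widehat\varrho^{(p)}]_+\vec X^{m+1}(p)+[\widehat\varrho^{(p)}]_-\vec X^m(p))\cdot\vec e_1\big)\vec\eta(p)\cdot\vec e_1$. The discrete energy of $\vec X\in\underline V^h$ is $E(\vec X)=2\pi(\vec X\cdot\vec e_1,|\vec X_\rho|)+2\pi\sum_{p\in\partial_1I}\widehat\varrho^{(p)}(\vec X(p)\cdot\vec e_1)(\vec X(p)\cdot\vec e_2)+\pi\sum_{p\in\partial_2I}\widehat\varrho^{(p)}(\vec X(p)\cdot\vec e_1)^2$. *)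

theory Defs
  imports "HOL-Analysis.Analysis"
begin

(* Finite element functions in V^h are represented by their nodal values
   X :: nat => 'a at the nodes q_0,...,q_J (indices > J are irrelevant).
   A piecewise continuous function on I is represented elementwise:
   F j rho is its (continuously extended) value on the closed element
   [q_{j-1}, q_j], j = 1..J. *)

definition node :: "nat \<Rightarrow> nat \<Rightarrow> real" where
  "node J j = real j / real J"

definition e1 :: "real \<times> real" where "e1 = (1, 0)"
definition e2 :: "real \<times> real" where "e2 = (0, 1)"

definition perp :: "real \<times> real \<Rightarrow> real \<times> real" where
  "perp v = (snd v, - fst v)"

definition posp :: "real \<Rightarrow> real" where "posp r = max r 0"
definition negp :: "real \<Rightarrow> real" where "negp r = - max (- r) 0"

definition bdry :: "bool \<Rightarrow> real set" where
  "bdry periodic = (if periodic then {} else {0, 1})"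

definition inVh :: "bool \<Rightarrow> nat \<Rightarrow> (nat \<Rightarrow> 'a) \<Rightarrow> bool" where
  "inVh periodic J X \<longleftrightarrow> (periodic \<longrightarrow> X J = X 0)"

definition bval :: "nat \<Rightarrow> (nat \<Rightarrow> 'a) \<Rightarrow> real \<Rightarrow> 'a" where
  "bval J X p = (if p = 0 then X 0 else X J)"

definition pl :: "nat \<Rightarrow> (nat \<Rightarrow> 'a::real_vector) \<Rightarrow> nat \<Rightarrow> real \<Rightarrow> 'a" where
  "pl J X j rho = X (j - 1) + ((rho - node J (j - 1)) * real J) *\<^sub>R (X j - X (j - 1))"

definition dpl :: "nat \<Rightarrow> (nat \<Rightarrow> 'a::real_vector) \<Rightarrow> nat \<Rightarrow> real \<Rightarrow> 'a" where
  "dpl J X j rho = real J *\<^sub>R (X j - X (j - 1))"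

definition nu :: "nat \<Rightarrow> (nat \<Rightarrow> real \<times> real) \<Rightarrow> nat \<Rightarrow> real \<Rightarrow> real \<times> real" where
  "nu J X j rho = - ((1 / norm (dpl J X j rho)) *\<^sub>R perp (dpl J X j rho))"

definition mlip :: "nat \<Rightarrow> (nat \<Rightarrow> real \<Rightarrow> 'a::real_inner) \<Rightarrow> (nat \<Rightarrow> real \<Rightarrow> 'a) \<Rightarrow> real" where
  "mlip J f g = (1 / real J) / 2 *
     (\<Sum>j = 1..J. f j (node J j) \<bullet> g j (node J j)
                 + f j (node J (j - 1)) \<bullet> g j (node J (j - 1)))"

definition l2ip :: "nat \<Rightarrow> (nat \<Rightarrow> real \<Rightarrow> 'a::real_inner) \<Rightarrow> (nat \<Rightarrow> real \<Rightarrow> 'a) \<Rightarrow> real" where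
  "l2ip J f g = (\<Sum>j = 1..J. integral {node J (j - 1) .. node J j} (\<lambda>rho. f j rho \<bullet> g j rho))"

definition Vh0 :: "bool \<Rightarrow> nat \<Rightarrow> real set \<Rightarrow> (nat \<Rightarrow> real \<times> real) \<Rightarrow> bool" where
  "Vh0 periodic J P0 eta \<longleftrightarrow> inVh periodic J eta \<and> (\<forall>p\<in>P0. bval J eta p \<bullet> e1 = 0)"

definition Vhb :: "bool \<Rightarrow> nat \<Rightarrow> real set \<Rightarrow> real set \<Rightarrow> real set \<Rightarrow> real set
                    \<Rightarrow> (nat \<Rightarrow> real \<times> real) \<Rightarrow> bool" where
  "Vhb periodic J PD P0 P1 P2 eta \<longleftrightarrow> Vh0 periodic J P0 eta
     \<and> (\<forall>p\<in>P1. bval J eta p \<bullet> e1 = 0) \<and> (\<forall>p\<in>P2. bval J eta p \<bullet> e2 = 0)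
     \<and> (\<forall>p\<in>PD. bval J eta p = 0)"

definition Wh0 :: "bool \<Rightarrow> nat \<Rightarrow> real set \<Rightarrow> (nat \<Rightarrow> real) \<Rightarrow> bool" where
  "Wh0 periodic J P0 chi \<longleftrightarrow> inVh periodic J chi \<and> (\<forall>p\<in>P0. bval J chi p = 0)"

definition assmA :: "nat \<Rightarrow> real set \<Rightarrow> (nat \<Rightarrow> real \<times> real) \<Rightarrow> bool" where
  "assmA J P0 X \<longleftrightarrow>
     (\<forall>j\<in>{1..J}. \<forall>rho\<in>{node J (j - 1) .. node J j}. norm (dpl J X j rho) > 0)
   \<and> (\<forall>j\<in>{1..J}. \<forall>rho\<in>{node J (j - 1) .. node J j}.
         rho \<notin> P0 \<longrightarrow> pl J X j rho \<bullet> e1 > 0)"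

definition energy :: "nat \<Rightarrow> real set \<Rightarrow> real set \<Rightarrow> (real \<Rightarrow> real)
                       \<Rightarrow> (nat \<Rightarrow> real \<times> real) \<Rightarrow> real" where
  "energy J P1 P2 varrho X =
     2 * pi * l2ip J (\<lambda>j rho. pl J X j rho \<bullet> e1) (\<lambda>j rho. norm (dpl J X j rho))
   + 2 * pi * (\<Sum>p\<in>P1. varrho p * (bval J X p \<bullet> e1) * (bval J X p \<bullet> e2))
   + pi * (\<Sum>p\<in>P2. varrho p * (bval J X p \<bullet> e1)\<^sup>2)"

definition Bm :: "nat \<Rightarrow> real set \<Rightarrow> real set \<Rightarrow> (real \<Rightarrow> real)
                   \<Rightarrow> (nat \<Rightarrow> real \<times> real) \<Rightarrow> (nat \<Rightarrow> real \<times> real)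
                   \<Rightarrow> (nat \<Rightarrow> real \<times> real) \<Rightarrow> real" where
  "Bm J P1 P2 varrho Xm Xm1 eta =
     - (\<Sum>p\<in>P1. varrho p * (bval J Xm p \<bullet> e1) * (bval J eta p \<bullet> e2))
     - (\<Sum>p\<in>P2. ((posp (varrho p) *\<^sub>R bval J Xm1 p + negp (varrho p) *\<^sub>R bval J Xm p) \<bullet> e1)
                  * (bval J eta p \<bullet> e1))"

end

theory Submission
  imports Defs
begin

text \<open>Test the second equation with \<open>\<eta> = \<delta>X\<^sup>m\<^sup>+\<^sup>1\<close> and the first with \<open>\<chi> = \<kappa>\<^sup>m\<^sup>+\<^sup>1\<close>.
  The change of the surface-area part of the energy is bounded by the integral terms of the
  second equation, because \<open>w(|v| - |u|) \<le> w v\<cdot>(v - u)/|u|\<close> for \<open>w \<ge> 0\<close>; the boundary terms are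
  bounded by \<open>B\<^sup>m(\<delta>X)\<close>, the quadratic term thanks to the splitting of \<open>\<varrho>\<close> into positive and
  negative part.  What remains is the curvature term, which by the first equation equals
  \<open>\<Delta>t\<^sub>m (X\<^sup>m\<cdot>e\<^sub>1 f(\<kappa>), \<kappa>|X\<^sup>m\<^sub>\<rho>|)\<^sup>h\<close> and is nonnegative since \<open>f(x) x \<ge> 0\<close>.\<close>

lemma pl_at_right_node: "J > 0 \<Longrightarrow> j \<ge> 1 \<Longrightarrow> pl J X j (node J j) = X j"
  by (simp add: pl_def node_def of_nat_diff field_simps)

lemma pl_at_left_node: "pl J X j (node J (j - Suc 0)) = X (j - Suc 0)"
  by (simp add: pl_def)

lemma pl_add: "pl J (\<lambda>i. X i + Y i) j rho = pl J X j rho + pl J Y j rho"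
  by (simp add: pl_def algebra_simps)

lemma dpl_add: "dpl J (\<lambda>i. X i + Y i) j rho = dpl J X j rho + dpl J Y j rho"
  by (simp add: dpl_def algebra_simps)

lemma bval_add: "bval J (\<lambda>i. X i + Y i) p = bval J X p + bval J Y p"
  by (simp add: bval_def)

lemma mlip_pl_comp:
  assumes "J > 0"
  shows "mlip J (\<lambda>j rho. a j rho * pl J (\<lambda>i. g (X i)) j rho) b
       = mlip J (\<lambda>j rho. a j rho * g (pl J X j rho)) b"
  unfolding mlip_def using assms
  by (intro arg_cong[where f = "\<lambda>x. _ * x"] sum.cong refl) (simp add: pl_at_right_node pl_at_left_node)

lemma pl_inner_nonneg:
  assumes "J > 0" "j \<ge> 1" "rho \<in> {node J (j - 1) .. node J j}"
    and "X (j - 1) \<bullet> v \<ge> 0" "X j \<bullet> v \<ge> 0"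
  shows "pl J X j rho \<bullet> v \<ge> 0"
proof -
  define t where "t = (rho - node J (j - 1)) * real J"
  have "node J j - node J (j - 1) = 1 / real J"
    using assms(1,2) by (simp add: node_def of_nat_diff field_simps)
  then have "rho - node J (j - 1) \<le> 1 / real J"
    using assms(3) by simp
  then have "0 \<le> t" "t \<le> 1"
    using assms(1,3) unfolding t_def by (auto simp: field_simps)
  moreover have "pl J X j rho \<bullet> v = (1 - t) * (X (j - 1) \<bullet> v) + t * (X j \<bullet> v)"
    unfolding pl_def t_def by (simp add: inner_add_left inner_diff_left algebra_simps)
  ultimately show ?thesis
    using assms(4,5) by simp
qed

lemma assmA_node_e1_nonneg:
  assumes "J > 0" "i \<le> J" "P0 \<subseteq> {0, 1}"
    and "assmA J P0 X" "Vh0 periodic J P0 X"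
  shows "X i \<bullet> e1 \<ge> 0"
proof -
  obtain j where j: "j \<in> {1..J}" "i = j \<or> i = j - 1"
    using assms(1,2) by (cases i) (auto intro: exI[of _ 1])
  then have "node J i \<in> {node J (j - 1) .. node J j}"
    using assms(1) by (auto simp: node_def divide_right_mono)
  moreover have "pl J X j (node J i) = X i"
    using j assms(1) by (auto simp: pl_at_right_node pl_at_left_node)
  ultimately have "node J i \<notin> P0 \<Longrightarrow> X i \<bullet> e1 > 0"
    using assms(4) j(1) unfolding assmA_def by metis
  moreover have "X i \<bullet> e1 = 0" if "node J i \<in> P0"
  proof -
    have "i = 0 \<or> i = J"
      using that assms(1,3) by (auto simp: node_def)
    then show ?thesis
      using that assms(1,5) unfolding Vh0_def by (auto simp: bval_def node_def)
  qed
  ultimately show ?thesis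
    by force
qed

lemma assmA_pl_e1_nonneg:
  assumes "J > 0" "P0 \<subseteq> {0, 1}" "assmA J P0 X" "Vh0 periodic J P0 X"
    and "j \<in> {1..J}" "rho \<in> {node J (j - 1) .. node J j}"
  shows "pl J X j rho \<bullet> e1 \<ge> 0"
  using assms by (intro pl_inner_nonneg assmA_node_e1_nonneg[OF _ _ assms(2-4)]) auto

lemma mono_zero_mult_self_nonneg:
  fixes f :: "real \<Rightarrow> real"
  assumes "mono f" "f 0 = 0"
  shows "f x * x \<ge> 0"
proof (cases "x \<ge> 0")
  case True
  then show ?thesis using assms by (metis mono_def mult_nonneg_nonneg)
next
  case False
  then show ?thesis using assms by (metis le_cases mono_def mult_nonpos_nonpos)
qed

lemma mlip_nonneg:
  assumes "\<And>j. j \<in> {1..J} \<Longrightarrow> f j (node J j) \<bullet> g j (node J j) \<ge> 0"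
    and "\<And>j. j \<in> {1..J} \<Longrightarrow> f j (node J (j - 1)) \<bullet> g j (node J (j - 1)) \<ge> 0"
  shows "mlip J f g \<ge> 0"
  unfolding mlip_def using assms by (intro mult_nonneg_nonneg sum_nonneg add_nonneg_nonneg) auto

lemma mlip_mono_nonneg:
  fixes f :: "real \<Rightarrow> real"
  assumes "mono f" "f 0 = 0" "J > 0"
    and w_nonneg: "\<And>j rho. j \<in> {1..J} \<Longrightarrow> rho \<in> {node J (j - 1) .. node J j} \<Longrightarrow> w j rho \<ge> 0"
    and s_nonneg: "\<And>j rho. s j rho \<ge> 0"
  shows "mlip J (\<lambda>j rho. w j rho * f (k j rho)) (\<lambda>j rho. k j rho * s j rho) \<ge> 0"
proof (intro mlip_nonneg)
  have summand_nonneg: "0 \<le> w j rho * f (k j rho) * (k j rho * s j rho)" if "w j rho \<ge> 0" for j rho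
    using mult_nonneg_nonneg[OF mult_nonneg_nonneg[OF that s_nonneg[of j rho]]
        mono_zero_mult_self_nonneg[OF assms(1,2), of "k j rho"]]
    by (simp add: ac_simps)
  fix j assume j: "j \<in> {1..J}"
  then have "node J (j - 1) \<in> {node J (j - 1) .. node J j}" "node J j \<in> {node J (j - 1) .. node J j}"
    using assms(3) by (auto simp: node_def divide_right_mono)
  then show "0 \<le> (w j (node J j) * f (k j (node J j))) \<bullet> (k j (node J j) * s j (node J j))"
    "0 \<le> (w j (node J (j - 1)) * f (k j (node J (j - 1)))) \<bullet> (k j (node J (j - 1)) * s j (node J (j - 1)))"
    using w_nonneg[OF j] by (simp_all add: summand_nonneg)
qed

lemma inner_normalized_increment_ge:
  fixes u v :: "'a::real_inner"
  assumes "norm u > 0"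
  shows "v \<bullet> (v - u) / norm u \<ge> norm v - norm u"
proof -
  have "v \<bullet> (v - u) - norm u * (norm v - norm u) = (norm v - norm u)\<^sup>2 + (norm v * norm u - v \<bullet> u)"
    by (simp add: inner_diff_right dot_square_norm power2_eq_square algebra_simps)
  also have "\<dots> \<ge> 0"
    using norm_cauchy_schwarz[of v u] by simp
  finally show ?thesis
    using assms by (simp add: pos_le_divide_eq mult.commute)
qed

lemma weighted_length_increment_le:
  fixes u v :: "'a::real_inner"
  assumes "norm u > 0" "w \<ge> 0"
  shows "(w + d) * norm v - w * norm u \<le> d * norm v + (w *\<^sub>R v) \<bullet> (inverse (norm u) *\<^sub>R (v - u))"
  using mult_left_mono[OF inner_normalized_increment_ge[OF assms(1), of v] assms(2)]
  by (simp add: algebra_simps divide_inverse)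

lemma area_increment_le:
  fixes X D :: "nat \<Rightarrow> 'a::real_inner" and c :: 'a
  defines "Y \<equiv> \<lambda>i. X i + D i"
  assumes w_nonneg: "\<And>j rho. j \<in> {1..J} \<Longrightarrow> rho \<in> {node J (j - 1) .. node J j} \<Longrightarrow> pl J X j rho \<bullet> c \<ge> 0"
    and dpl_pos: "\<And>j rho. j \<in> {1..J} \<Longrightarrow> rho \<in> {node J (j - 1) .. node J j} \<Longrightarrow> norm (dpl J X j rho) > 0"
  shows "l2ip J (\<lambda>j rho. pl J Y j rho \<bullet> c) (\<lambda>j rho. norm (dpl J Y j rho))
       - l2ip J (\<lambda>j rho. pl J X j rho \<bullet> c) (\<lambda>j rho. norm (dpl J X j rho))
     \<le> l2ip J (\<lambda>j rho. pl J D j rho \<bullet> c) (\<lambda>j rho. norm (dpl J Y j rho))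
       + l2ip J (\<lambda>j rho. (pl J X j rho \<bullet> c) *\<^sub>R dpl J Y j rho)
                (\<lambda>j rho. inverse (norm (dpl J X j rho)) *\<^sub>R dpl J D j rho)"
proof -
  have area_cont: "continuous_on S (\<lambda>rho. (pl J Z j rho \<bullet> c) * norm (dpl J Z' j rho))"
    for S Z Z' j unfolding pl_def dpl_def by (intro continuous_intros)
  have inner_cont: "continuous_on S (\<lambda>rho. (pl J Z j rho \<bullet> c) *\<^sub>R dpl J Z' j rho
                      \<bullet> (inverse (norm (dpl J Z'' j rho)) *\<^sub>R dpl J Z''' j rho))"
    for S Z Z' Z'' Z''' j unfolding pl_def dpl_def by (intro continuous_intros)
  let ?I = "\<lambda>j. {node J (j - 1) .. node J j}"
  let ?h = "\<lambda>Z j rho. (pl J Z j rho \<bullet> c) * norm (dpl J Z j rho)"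
  let ?g = "\<lambda>j rho. (pl J D j rho \<bullet> c) * norm (dpl J Y j rho)
      + (pl J X j rho \<bullet> c) *\<^sub>R dpl J Y j rho \<bullet> (inverse (norm (dpl J X j rho)) *\<^sub>R dpl J D j rho)"
  have "l2ip J (\<lambda>j rho. pl J Y j rho \<bullet> c) (\<lambda>j rho. norm (dpl J Y j rho))
       - l2ip J (\<lambda>j rho. pl J X j rho \<bullet> c) (\<lambda>j rho. norm (dpl J X j rho))
      = (\<Sum>j = 1..J. integral (?I j) (\<lambda>rho. ?h Y j rho - ?h X j rho))"
    unfolding l2ip_def inner_real_def sum_subtractf[symmetric]
    by (intro sum.cong refl integral_diff[symmetric] integrable_continuous_interval area_cont)
  also have "\<dots> \<le> (\<Sum>j = 1..J. integral (?I j) (?g j))"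
  proof (intro sum_mono integral_le integrable_continuous_interval continuous_on_diff
      continuous_on_add area_cont inner_cont)
    fix j rho assume "j \<in> {1..J}" "rho \<in> ?I j"
    from weighted_length_increment_le[OF dpl_pos[OF this] w_nonneg[OF this],
        where v = "dpl J Y j rho" and d = "pl J D j rho \<bullet> c"]
    show "?h Y j rho - ?h X j rho \<le> ?g j rho"
      by (simp add: Y_def pl_add dpl_add inner_add_left)
  qed
  also have "\<dots> = l2ip J (\<lambda>j rho. pl J D j rho \<bullet> c) (\<lambda>j rho. norm (dpl J Y j rho))
       + l2ip J (\<lambda>j rho. (pl J X j rho \<bullet> c) *\<^sub>R dpl J Y j rho)
                (\<lambda>j rho. inverse (norm (dpl J X j rho)) *\<^sub>R dpl J D j rho)"
    unfolding l2ip_def inner_real_def sum.distrib[symmetric]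
    by (intro sum.cong refl integral_add integrable_continuous_interval area_cont inner_cont)
  finally show ?thesis .
qed

lemma split_quadratic_increment_le:
  fixes r a d :: real
  shows "r * (a + d)\<^sup>2 \<le> r * a\<^sup>2 + 2 * ((posp r * (a + d) + negp r * a) * d)"
proof -
  have "r * a\<^sup>2 + 2 * ((posp r * (a + d) + negp r * a) * d) - r * (a + d)\<^sup>2
      = (posp r - negp r) * d\<^sup>2"
    by (cases "r \<ge> 0") (simp_all add: posp_def negp_def power2_eq_square algebra_simps)
  moreover have "posp r - negp r \<ge> 0"
    by (simp add: posp_def negp_def)
  ultimately show ?thesis
    by (metis diff_ge_0_iff_ge zero_le_power2 mult_nonneg_nonneg)
qed

lemma energy_step_le:
  fixes X D :: "nat \<Rightarrow> real \<times> real"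
  defines "Y \<equiv> \<lambda>i. X i + D i"
  assumes "\<And>j rho. j \<in> {1..J} \<Longrightarrow> rho \<in> {node J (j - 1) .. node J j} \<Longrightarrow> pl J X j rho \<bullet> e1 \<ge> 0"
    and "\<And>j rho. j \<in> {1..J} \<Longrightarrow> rho \<in> {node J (j - 1) .. node J j} \<Longrightarrow> norm (dpl J X j rho) > 0"
    and D_P1: "\<forall>p\<in>P1. bval J D p \<bullet> e1 = 0"
    and tested: "T + l2ip J (\<lambda>j rho. pl J D j rho \<bullet> e1) (\<lambda>j rho. norm (dpl J Y j rho))
       + l2ip J (\<lambda>j rho. (pl J X j rho \<bullet> e1) *\<^sub>R dpl J Y j rho)
                (\<lambda>j rho. inverse (norm (dpl J X j rho)) *\<^sub>R dpl J D j rho)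
       = Bm J P1 P2 varrho X Y D"
  shows "energy J P1 P2 varrho Y + 2 * pi * T \<le> energy J P1 P2 varrho X"
proof -
  have P1_sum: "2 * pi * (\<Sum>p\<in>P1. varrho p * (bval J Y p \<bullet> e1) * (bval J Y p \<bullet> e2))
      = 2 * pi * (\<Sum>p\<in>P1. varrho p * (bval J X p \<bullet> e1) * (bval J X p \<bullet> e2))
      + 2 * pi * (\<Sum>p\<in>P1. varrho p * (bval J X p \<bullet> e1) * (bval J D p \<bullet> e2))"
    unfolding distrib_left[symmetric] sum.distrib[symmetric] using D_P1
    by (intro arg_cong[where f = "\<lambda>x. 2 * pi * x"] sum.cong refl)
      (simp add: Y_def bval_add inner_add_left algebra_simps)
  have "(\<Sum>p\<in>P2. varrho p * (bval J Y p \<bullet> e1)\<^sup>2)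
      \<le> (\<Sum>p\<in>P2. varrho p * (bval J X p \<bullet> e1)\<^sup>2)
      + 2 * (\<Sum>p\<in>P2. ((posp (varrho p) *\<^sub>R bval J Y p + negp (varrho p) *\<^sub>R bval J X p) \<bullet> e1)
                  * (bval J D p \<bullet> e1))"
    unfolding sum_distrib_left sum.distrib[symmetric]
    by (intro sum_mono)
      (simp add: Y_def bval_add inner_add_left split_quadratic_increment_le)
  from mult_left_mono[OF this pi_ge_zero]
  have P2_sum: "pi * (\<Sum>p\<in>P2. varrho p * (bval J Y p \<bullet> e1)\<^sup>2)
      \<le> pi * (\<Sum>p\<in>P2. varrho p * (bval J X p \<bullet> e1)\<^sup>2)
      + 2 * pi * (\<Sum>p\<in>P2. ((posp (varrho p) *\<^sub>R bval J Y p + negp (varrho p) *\<^sub>R bval J X p) \<bullet> e1)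
                  * (bval J D p \<bullet> e1))"
    by (simp add: algebra_simps)
  have area: "2 * pi * l2ip J (\<lambda>j rho. pl J Y j rho \<bullet> e1) (\<lambda>j rho. norm (dpl J Y j rho))
      \<le> 2 * pi * l2ip J (\<lambda>j rho. pl J X j rho \<bullet> e1) (\<lambda>j rho. norm (dpl J X j rho))
       + 2 * pi * l2ip J (\<lambda>j rho. pl J D j rho \<bullet> e1) (\<lambda>j rho. norm (dpl J Y j rho))
       + 2 * pi * l2ip J (\<lambda>j rho. (pl J X j rho \<bullet> e1) *\<^sub>R dpl J Y j rho)
                (\<lambda>j rho. inverse (norm (dpl J X j rho)) *\<^sub>R dpl J D j rho)"
    using mult_left_mono[OF area_increment_le[of J X e1 D, OF assms(2,3)], of "2 * pi"]
    unfolding Y_def by (simp add: algebra_simps)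
  have "2 * pi * T + 2 * pi * l2ip J (\<lambda>j rho. pl J D j rho \<bullet> e1) (\<lambda>j rho. norm (dpl J Y j rho))
       + 2 * pi * l2ip J (\<lambda>j rho. (pl J X j rho \<bullet> e1) *\<^sub>R dpl J Y j rho)
                (\<lambda>j rho. inverse (norm (dpl J X j rho)) *\<^sub>R dpl J D j rho)
       = 2 * pi * Bm J P1 P2 varrho X Y D"
    unfolding tested[symmetric] by (simp add: algebra_simps)
  then show ?thesis
    using area P1_sum P2_sum
    unfolding energy_def Bm_def right_diff_distrib distrib_left by linarith
qed

lemma mlip_rescale:
  fixes a k m :: "nat \<Rightarrow> real \<Rightarrow> real" and n p :: "nat \<Rightarrow> real \<Rightarrow> 'a::real_inner"
  assumes "dt \<noteq> 0"
  shows "mlip J (\<lambda>j rho. (a j rho * k j rho) *\<^sub>R n j rho) (\<lambda>j rho. m j rho *\<^sub>R p j rho)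
       = dt * mlip J (\<lambda>j rho. a j rho *\<^sub>R ((1 / dt) *\<^sub>R p j rho)) (\<lambda>j rho. (k j rho * m j rho) *\<^sub>R n j rho)"
  unfolding mlip_def using assms
  by (simp add: sum_distrib_left inner_commute[of "n _ _"] algebra_simps)

theorem mainTheorem10:
  fixes periodic :: bool and J :: nat
    and PD P0 P1 P2 :: "real set" and varrho :: "real \<Rightarrow> real"
    and f :: "real \<Rightarrow> real" and dt :: real
    and Xm dX :: "nat \<Rightarrow> real \<times> real" and kappa :: "nat \<Rightarrow> real"
  defines "Xm1 \<equiv> (\<lambda>i. Xm i + dX i)"
  assumes J3: "J \<ge> 3"
    and partition: "PD \<union> P0 \<union> P1 \<union> P2 = bdry periodic"
      "PD \<inter> P0 = {}" "PD \<inter> P1 = {}" "PD \<inter> P2 = {}"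
      "P0 \<inter> P1 = {}" "P0 \<inter> P2 = {}" "P1 \<inter> P2 = {}"
    and varrho_bd: "\<forall>p\<in>bdry periodic. \<bar>varrho p\<bar> \<le> 1"
    and f_mono: "mono f" and f0: "f 0 = 0"
    and Xm_in: "Vh0 periodic J P0 Xm" and A: "assmA J P0 Xm"
    and dt_pos: "dt > 0"
    and dX_in: "Vhb periodic J PD P0 P1 P2 dX"
    and kappa_in: "Wh0 periodic J P0 kappa"
    and eq1: "\<forall>chi. Wh0 periodic J P0 chi \<longrightarrow>
        mlip J (\<lambda>j rho. (pl J Xm j rho \<bullet> e1) *\<^sub>R ((1 / dt) *\<^sub>R (pl J Xm1 j rho - pl J Xm j rho)))
               (\<lambda>j rho. (pl J chi j rho * norm (dpl J Xm j rho)) *\<^sub>R nu J Xm j rho)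
      = mlip J (\<lambda>j rho. (pl J Xm j rho \<bullet> e1) * pl J (\<lambda>i. f (kappa i)) j rho)
               (\<lambda>j rho. pl J chi j rho * norm (dpl J Xm j rho))"
    and eq2: "\<forall>eta. Vhb periodic J PD P0 P1 P2 eta \<longrightarrow>
        mlip J (\<lambda>j rho. ((pl J Xm j rho \<bullet> e1) * pl J kappa j rho) *\<^sub>R nu J Xm j rho)
               (\<lambda>j rho. norm (dpl J Xm j rho) *\<^sub>R pl J eta j rho)
      + l2ip J (\<lambda>j rho. pl J eta j rho \<bullet> e1) (\<lambda>j rho. norm (dpl J Xm1 j rho))
      + l2ip J (\<lambda>j rho. (pl J Xm j rho \<bullet> e1) *\<^sub>R dpl J Xm1 j rho)
               (\<lambda>j rho. inverse (norm (dpl J Xm j rho)) *\<^sub>R dpl J eta j rho)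
      = Bm J P1 P2 varrho Xm Xm1 eta"
  shows "energy J P1 P2 varrho Xm1
           + 2 * pi * dt * mlip J (\<lambda>j rho. (pl J Xm j rho \<bullet> e1) * f (pl J kappa j rho))
                                  (\<lambda>j rho. pl J kappa j rho * norm (dpl J Xm j rho))
         \<le> energy J P1 P2 varrho Xm
      \<and> energy J P1 P2 varrho Xm1 \<le> energy J P1 P2 varrho Xm"
proof -
  define M where "M = mlip J (\<lambda>j rho. (pl J Xm j rho \<bullet> e1) * f (pl J kappa j rho))
                             (\<lambda>j rho. pl J kappa j rho * norm (dpl J Xm j rho))"
  have J_pos: "J > 0" using J3 by simp
  have "P0 \<subseteq> {0, 1}" using partition(1) by (auto simp: bdry_def split: if_splits)
  then have w_nonneg: "pl J Xm j rho \<bullet> e1 \<ge> 0" if "j \<in> {1..J}" "rho \<in> {node J (j - 1) .. node J j}" for j rho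
    using assmA_pl_e1_nonneg[OF J_pos _ A Xm_in that] by blast
  have dpl_pos: "norm (dpl J Xm j rho) > 0" if "j \<in> {1..J}" "rho \<in> {node J (j - 1) .. node J j}" for j rho
    using A that unfolding assmA_def by blast
  have "\<forall>p\<in>P1. bval J dX p \<bullet> e1 = 0"
    using dX_in unfolding Vhb_def by auto
  then have "energy J P1 P2 varrho Xm1 + 2 * pi *
      mlip J (\<lambda>j rho. ((pl J Xm j rho \<bullet> e1) * pl J kappa j rho) *\<^sub>R nu J Xm j rho)
             (\<lambda>j rho. norm (dpl J Xm j rho) *\<^sub>R pl J dX j rho)
      \<le> energy J P1 P2 varrho Xm"
    using w_nonneg dpl_pos eq2[rule_format, OF dX_in] unfolding Xm1_def
    by (intro energy_step_le) auto
  also have "mlip J (\<lambda>j rho. ((pl J Xm j rho \<bullet> e1) * pl J kappa j rho) *\<^sub>R nu J Xm j rho)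
             (\<lambda>j rho. norm (dpl J Xm j rho) *\<^sub>R pl J dX j rho)
      = dt * mlip J (\<lambda>j rho. (pl J Xm j rho \<bullet> e1) *\<^sub>R ((1 / dt) *\<^sub>R (pl J Xm1 j rho - pl J Xm j rho)))
               (\<lambda>j rho. (pl J kappa j rho * norm (dpl J Xm j rho)) *\<^sub>R nu J Xm j rho)"
    unfolding Xm1_def pl_add using dt_pos by (simp only: mlip_rescale add_diff_cancel_left')
  also have "\<dots> = dt * M"
    unfolding eq1[rule_format, OF kappa_in] M_def
    using mlip_pl_comp[OF J_pos, of "\<lambda>j rho. pl J Xm j rho \<bullet> e1" f kappa] by simp
  finally have "energy J P1 P2 varrho Xm1 + 2 * pi * dt * M \<le> energy J P1 P2 varrho Xm"
    by (simp only: mult.assoc)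
  moreover have "M \<ge> 0"
    unfolding M_def using w_nonneg by (intro mlip_mono_nonneg[OF f_mono f0 J_pos]) auto
  with dt_pos have "2 * pi * dt * M \<ge> 0"
    by simp
  ultimately show ?thesis
    unfolding M_def by linarith
qed

end
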